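(* Let $\varrho=\{\varrho_{t,T}\}_{t\in[0,T]}$ be a dynamic risk measure which is stochastically conditionally time-consistent, normalized, and translation invariant. Then $\varrho$ is time consistent, i.e. $\varrho_{t,T}(Z_T)=\varrho_{t,T}\big(\varrho_{r,T}(Z_T)\big)$ for all $0\le t\le r\le T$ and all $Z_T\in\mathcal Z_T$, and $\varrho$ has the local property, i.e. $\varrho_{t,T}(\mathbf 1_A Z_T)=\mathbf 1_A\,\varrho_{t,T}(Z_T)$ for all $t\in[0,T]$, $Z_T\in\mathcal Z_T$ and $A\in\mathcal F_t$.
   Context: Let $\mathcal X$ be a finite state space, $T>0$, and $\{X_t\}_{0\le t\le T}$ a continuous-time Markov chain with values in $\mathcal X$, starting at a fixed state $x_0$, with transition function $Q_{t,r}(y|x)=P(X_r=y\mid X_t=x)$, $0\le t<r\le T$, $x,y\in\mathcal X$. The transition rates $G_t(y|x)=\lim_{\tau\downarrow0}\frac1\tau[Q_{t,t+\tau}(y|x)-\delta_x(y)]$ are assumed to exist, be finite and be uniformly bounded over $t\in[0,T]$ ($\delta_x(y)=1$ if $y=x$, $0$ otherwise). For $0\le t<r\le T$ and $\xi\in\mathcal X$, $\Xi^{\xi}_{t,r}$ denotes the space of piecewise-constant right-continuous paths $[t,r]\to\mathcal X$ starting at $\xi$ (with the $\sigma$-algebra generated by finite-dimensional cylinders), $P^{\xi}_{t,r}$ the law on it of the chain started at $\xi$ at time $t$, and $\Xi_{0,t}=\bigcup_{\xi}\Xi^{\xi}_{0,t}$. $\{\mathcal F_t\}$ is the filtration generated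 by $X$, and $\mathcal Z_t$ is the space of bounded $\mathcal F_t$-measurable random variables, each identified with a measurable functional of the path $\xi_{[0,t]}$. A conditional risk measure is a mapping $\varrho_{t,T}:\mathcal Z_T\to\mathcal Z_t$; a dynamic risk measure is a family $\varrho=\{\varrho_{t,T}\}_{t\in[0,T]}$ of them. It is normalized if $\varrho_{t,T}(0)=0$ for all $t$; translation invariant if $\varrho_{t,T}(Z_t+Z_T)=Z_t+\varrho_{t,T}(Z_T)$ for all $Z_t\in\mathcal Z_t$, $Z_T\in\mathcal Z_T$, $t\in[0,T]$. For a fixed history $\xi_{[0,t]}\in\Xi_{0,t}$ and $r\in[t,T]$, $\varrho_{r,T}(Z_T)\mid\xi_{[0,t]}$ denotes the random variable $\varrho_{r,T}(Z_T)$ regarded as a function of the path on $[t,r]$ that continues $\xi_{[0,t]}$, with the distribution induced by $P^{\xi_t}_{t,r}$; $\varrho_{t,T}(Z_T)(\xi_{[0,t]})$ denotes the value of $\varrho_{t,T}(Z_T)$ at the history $\xi_{[0,t]}$. For random variables $U,V$ (possibly on different probability spaces), $U\preceq_{\rm st}V$ means $P(U>\eta)\le P(V>\eta)$ for all $\eta\in\mathbb R$. The dynamic risk measure $\varrho$ is stochastically conditionally time-consistent if for all $0\le t\le r\le T$, all $\xi_{[0,t]}\in\Xi_{0,t}$ and all $Z_T,W_T\in\mathcal Z_T$, the relation $\varrho_{r,T}(Z_T)\mid\xi_{[0,t]}\preceq_{\rm st}\varrho_{r,T}(W_T)\mid\xi_{[0,t]}$ implies $\varrho_{t,T}(Z_T)(\xi_{[0,t]})\le\varrho_{t,T}(W_T)(\xi_{[0,t]})$.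 *)

theory Defs
  imports "HOL-Probability.Probability"
begin

text \<open>A path on [t,r] is represented as a function real => state which is
 constant (= its value at t) before t and constant (= its value at r) after r;
 on [t,r] it is piecewise constant, right-continuous, with finitely many jumps.\<close>

definition pc_paths :: "real \<Rightarrow> real \<Rightarrow> (real \<Rightarrow> 'x) set" where
  "pc_paths t r =
    {\<omega>. (\<forall>s. \<omega> s = \<omega> (max t (min s r))) \<and>
         (\<exists>J. finite J \<and> J \<subseteq> {t<..r} \<and>
              (\<forall>s\<in>{t..r}. \<omega> s = \<omega> (Max (insert t {j\<in>J. j \<le> s}))))}"

definition path_space :: "real \<Rightarrow> real \<Rightarrow> 'x \<Rightarrow> (real \<Rightarrow> 'x) set" where
  "path_space t r \<xi> = {\<omega> \<in> pc_paths t r. \<omega> t = \<xi>}"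

definition cyl_sets :: "(real \<Rightarrow> 'x) set \<Rightarrow> real \<Rightarrow> real \<Rightarrow> (real \<Rightarrow> 'x) set set" where
  "cyl_sets S a b = {{\<omega> \<in> S. \<omega> s = y} | s y. s \<in> {a..b}}"

definition path_measure :: "real \<Rightarrow> real \<Rightarrow> 'x \<Rightarrow> (real \<Rightarrow> 'x) measure" where
  "path_measure t r \<xi> = sigma (path_space t r \<xi>) (cyl_sets (path_space t r \<xi>) t r)"

definition filt :: "real \<Rightarrow> real \<Rightarrow> (real \<Rightarrow> 'x) measure" where
  "filt T t = sigma (pc_paths 0 T) (cyl_sets (pc_paths 0 T) 0 t)"

definition Zspace :: "real \<Rightarrow> real \<Rightarrow> ((real \<Rightarrow> 'x) \<Rightarrow> real) set" where
  "Zspace T t = {Z. Z \<in> borel_measurable (filt T t) \<and> (\<exists>B. \<forall>\<omega>. \<bar>Z \<omega>\<bar> \<le> B) \<and>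
                    (\<forall>\<omega>. \<omega> \<notin> pc_paths 0 T \<longrightarrow> Z \<omega> = 0)}"

text \<open>Q t r x y stands for Q_{t,r}(y|x).\<close>
definition transition_function :: "real \<Rightarrow> (real \<Rightarrow> real \<Rightarrow> 'x::finite \<Rightarrow> 'x \<Rightarrow> real) \<Rightarrow> bool" where
  "transition_function T Q \<longleftrightarrow>
     (\<forall>t r x. 0 \<le> t \<longrightarrow> t \<le> r \<longrightarrow> r \<le> T \<longrightarrow>
         (\<forall>y. Q t r x y \<ge> 0) \<and> (\<Sum>y\<in>UNIV. Q t r x y) = 1) \<and>
     (\<forall>t x y. 0 \<le> t \<longrightarrow> t \<le> T \<longrightarrow> Q t t x y = (if y = x then 1 else 0)) \<and>
     (\<forall>t s r x z. 0 \<le> t \<longrightarrow> t \<le> s \<longrightarrow> s \<le> r \<longrightarrow> r \<le> T \<longrightarrow>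
         Q t r x z = (\<Sum>y\<in>UNIV. Q t s x y * Q s r y z))"

definition bounded_rates :: "real \<Rightarrow> (real \<Rightarrow> real \<Rightarrow> 'x \<Rightarrow> 'x \<Rightarrow> real) \<Rightarrow> bool" where
  "bounded_rates T Q \<longleftrightarrow>
     (\<exists>G B. \<forall>t\<in>{0..<T}. \<forall>x y.
        ((\<lambda>\<tau>. (Q t (t + \<tau>) x y - (if y = x then 1 else 0)) / \<tau>) \<longlongrightarrow> G t x y) (at_right 0)
        \<and> \<bar>G t x y\<bar> \<le> B)"

fun fdd_prob :: "(real \<Rightarrow> real \<Rightarrow> 'x \<Rightarrow> 'x \<Rightarrow> real) \<Rightarrow> real \<Rightarrow> 'x \<Rightarrow> real list \<Rightarrow> 'x list \<Rightarrow> real" where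
  "fdd_prob Q t x (s # ss) (y # ys) = Q t s x y * fdd_prob Q s y ss ys"
| "fdd_prob Q t x _ _ = 1"

text \<open>P t r xi is the law P^xi_{t,r} of the chain started at xi at time t, on the
 path space over [t,r].\<close>
definition chain_law ::
  "real \<Rightarrow> (real \<Rightarrow> real \<Rightarrow> 'x \<Rightarrow> 'x \<Rightarrow> real) \<Rightarrow> (real \<Rightarrow> real \<Rightarrow> 'x \<Rightarrow> (real \<Rightarrow> 'x) measure) \<Rightarrow> bool" where
  "chain_law T Q P \<longleftrightarrow>
     (\<forall>t r \<xi>. 0 \<le> t \<longrightarrow> t \<le> r \<longrightarrow> r \<le> T \<longrightarrow>
        prob_space (P t r \<xi>) \<and>
        space (P t r \<xi>) = path_space t r \<xi> \<and>
        sets (P t r \<xi>) = sets (path_measure t r \<xi>) \<and>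
        (\<forall>ss ys. sorted ss \<longrightarrow> set ss \<subseteq> {t..r} \<longrightarrow> length ys = length ss \<longrightarrow>
           measure (P t r \<xi>) {\<omega> \<in> path_space t r \<xi>. list_all2 (\<lambda>s y. \<omega> s = y) ss ys}
             = fdd_prob Q t \<xi> ss ys))"

definition dyn_risk_measure ::
  "real \<Rightarrow> (real \<Rightarrow> ((real \<Rightarrow> 'x) \<Rightarrow> real) \<Rightarrow> ((real \<Rightarrow> 'x) \<Rightarrow> real)) \<Rightarrow> bool" where
  "dyn_risk_measure T \<rho> \<longleftrightarrow> (\<forall>t\<in>{0..T}. \<forall>Z\<in>Zspace T T. \<rho> t Z \<in> Zspace T t)"

definition normalized :: "real \<Rightarrow> (real \<Rightarrow> ((real \<Rightarrow> 'x) \<Rightarrow> real) \<Rightarrow> ((real \<Rightarrow> 'x) \<Rightarrow> real)) \<Rightarrow> bool" where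
  "normalized T \<rho> \<longleftrightarrow> (\<forall>t\<in>{0..T}. \<rho> t (\<lambda>_. 0) = (\<lambda>_. 0))"

definition translation_invariant ::
  "real \<Rightarrow> (real \<Rightarrow> ((real \<Rightarrow> 'x) \<Rightarrow> real) \<Rightarrow> ((real \<Rightarrow> 'x) \<Rightarrow> real)) \<Rightarrow> bool" where
  "translation_invariant T \<rho> \<longleftrightarrow>
     (\<forall>t\<in>{0..T}. \<forall>Zt\<in>Zspace T t. \<forall>ZT\<in>Zspace T T.
        \<rho> t (\<lambda>\<omega>. Zt \<omega> + ZT \<omega>) = (\<lambda>\<omega>. Zt \<omega> + \<rho> t ZT \<omega>))"

definition st_le :: "'a measure \<Rightarrow> ('a \<Rightarrow> real) \<Rightarrow> 'b measure \<Rightarrow> ('b \<Rightarrow> real) \<Rightarrow> bool" where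
  "st_le M U N V \<longleftrightarrow>
     (\<forall>\<eta>::real. measure M {x \<in> space M. U x > \<eta>} \<le> measure N {y \<in> space N. V y > \<eta>})"

text \<open>Continuation of the history omega on [0,t] by the path eta on [t,r].\<close>
definition glue :: "real \<Rightarrow> (real \<Rightarrow> 'x) \<Rightarrow> (real \<Rightarrow> 'x) \<Rightarrow> (real \<Rightarrow> 'x)" where
  "glue t \<omega> \<eta> = (\<lambda>s. if s < t then \<omega> s else \<eta> s)"

text \<open>Stochastic conditional time consistency.  A history xi_[0,t] in Xi_{0,t} is
 represented by any omega in Xi_{0,T} whose restriction to [0,t] is xi_[0,t].\<close>
definition stoch_cond_time_consistent ::
  "real \<Rightarrow> (real \<Rightarrow> real \<Rightarrow> 'x \<Rightarrow> (real \<Rightarrow> 'x) measure) \<Rightarrow>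
   (real \<Rightarrow> ((real \<Rightarrow> 'x) \<Rightarrow> real) \<Rightarrow> ((real \<Rightarrow> 'x) \<Rightarrow> real)) \<Rightarrow> bool" where
  "stoch_cond_time_consistent T P \<rho> \<longleftrightarrow>
     (\<forall>t r. 0 \<le> t \<longrightarrow> t \<le> r \<longrightarrow> r \<le> T \<longrightarrow>
       (\<forall>\<omega>\<in>pc_paths 0 T. \<forall>Z\<in>Zspace T T. \<forall>W\<in>Zspace T T.
          st_le (P t r (\<omega> t)) (\<lambda>\<eta>. \<rho> r Z (glue t \<omega> \<eta>))
                (P t r (\<omega> t)) (\<lambda>\<eta>. \<rho> r W (glue t \<omega> \<eta>))
          \<longrightarrow> \<rho> t Z \<omega> \<le> \<rho> t W \<omega>))"

end

theory Submission
  imports Defs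
begin

text \<open>If two positions have the same risk along every continuation of a history, each is
  stochastically dominated by the other, so stochastic conditional time consistency forces
  equal risk at that history. Translation invariance with normalization makes \<open>\<rho>\<^sub>r\<close> the
  identity on \<open>\<Z>\<^sub>r\<close>; applied to \<open>\<rho>\<^sub>r(Z)\<close> this gives time consistency, and applied at \<open>r = T\<close>
  it shows that \<open>\<rho>\<^sub>t(Z)\<close> at a history only depends on \<open>Z\<close> along its continuations. Since an
  event of \<open>\<F>\<^sub>t\<close> is decided by the history up to \<open>t\<close>, the position \<open>\<one>\<^sub>A Z\<close> coincides
  there with \<open>Z\<close> or with \<open>0\<close>, which yields the local property. Of the chain laws only their
  support, the path space, enters the argument.\<close>

lemma cyl_sets_subset_Pow: "cyl_sets S a b \<subseteq> Pow S"
  unfolding cyl_sets_def by auto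

lemma sets_filt: "sets (filt T t) = sigma_sets (pc_paths 0 T) (cyl_sets (pc_paths 0 T) 0 t)"
  unfolding filt_def by (rule sets_measure_of[OF cyl_sets_subset_Pow])

lemma space_filt: "space (filt T t) = pc_paths 0 T"
  unfolding filt_def by (rule space_measure_of[OF cyl_sets_subset_Pow])

lemma subalgebra_filt:
  assumes "s \<le> t"
  shows "subalgebra (filt T t) (filt T s)"
  unfolding subalgebra_def space_filt sets_filt
proof (intro conjI refl sigma_sets_mono')
  show "cyl_sets (pc_paths 0 T) 0 s \<subseteq> cyl_sets (pc_paths 0 T) 0 t"
    using assms unfolding cyl_sets_def by fastforce
qed

lemma sets_filt_mono: "s \<le> t \<Longrightarrow> A \<in> sets (filt T s) \<Longrightarrow> A \<in> sets (filt T t)"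
  using subalgebra_filt unfolding subalgebra_def by blast

lemma Zspace_mono: "s \<le> t \<Longrightarrow> Z \<in> Zspace T s \<Longrightarrow> Z \<in> Zspace T t"
  using measurable_from_subalg[OF subalgebra_filt] unfolding Zspace_def by blast

lemma zero_in_Zspace: "(\<lambda>_. 0) \<in> Zspace T t"
  unfolding Zspace_def by auto

lemma Zspace_vanishes: "Z \<in> Zspace T t \<Longrightarrow> \<omega> \<notin> pc_paths 0 T \<Longrightarrow> Z \<omega> = 0"
  unfolding Zspace_def by blast

lemma indicator_times_in_Zspace:
  assumes A: "A \<in> sets (filt T t)" and Z: "Z \<in> Zspace T t"
  shows "(\<lambda>\<omega>. indicator A \<omega> * Z \<omega>) \<in> Zspace T t"
proof -
  obtain B where B: "\<And>\<omega>. \<bar>Z \<omega>\<bar> \<le> B" using Z unfolding Zspace_def by blast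
  have "\<bar>indicator A \<omega> * Z \<omega>\<bar> \<le> B" for \<omega>
    using B[of \<omega>] by (simp add: indicator_def order_trans[OF abs_ge_zero])
  moreover have "(\<lambda>\<omega>. indicator A \<omega> * Z \<omega>) \<in> borel_measurable (filt T t)"
    using Z A unfolding Zspace_def by (intro borel_measurable_times borel_measurable_indicator) auto
  ultimately show ?thesis using Z unfolding Zspace_def by auto
qed

lemma sets_filt_determined_by_history:
  assumes "A \<in> sets (filt T t)" "\<omega> \<in> pc_paths 0 T" "\<omega>' \<in> pc_paths 0 T"
    and "\<And>s. s \<in> {0..t} \<Longrightarrow> \<omega> s = \<omega>' s"
  shows "\<omega> \<in> A \<longleftrightarrow> \<omega>' \<in> A"
  using assms(1) unfolding sets_filt
proof (induction rule: sigma_sets.induct)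
  case (Basic a)
  then show ?case using assms(2-4) unfolding cyl_sets_def by auto
qed (use assms(2,3) in auto)

lemma indicator_glue:
  assumes "A \<in> sets (filt T t)" "\<omega> \<in> pc_paths 0 T" "\<eta> t = \<omega> t" "Z \<in> Zspace T T"
  shows "indicator A (glue t \<omega> \<eta>) * Z (glue t \<omega> \<eta>) = indicator A \<omega> * Z (glue t \<omega> \<eta>)"
proof (cases "glue t \<omega> \<eta> \<in> pc_paths 0 T")
  case True
  have "\<omega> s = glue t \<omega> \<eta> s" if "s \<in> {0..t}" for s
    using that assms(3) unfolding glue_def by auto
  then have "glue t \<omega> \<eta> \<in> A \<longleftrightarrow> \<omega> \<in> A"
    using sets_filt_determined_by_history[OF assms(1,2) True] by blast
  then show ?thesis by (simp add: indicator_def)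
next
  case False
  then show ?thesis using Zspace_vanishes[OF assms(4)] by simp
qed

lemma st_le_cong:
  assumes "\<And>x. x \<in> space M \<Longrightarrow> U x = V x"
  shows "st_le M U M V"
proof -
  have "{x \<in> space M. U x > \<eta>} = {x \<in> space M. V x > \<eta>}" for \<eta>
    using assms by auto
  then show ?thesis unfolding st_le_def by simp
qed

lemma stoch_cond_time_consistent_cong:
  assumes "stoch_cond_time_consistent T P \<rho>" "0 \<le> t" "t \<le> r" "r \<le> T"
    and "\<omega> \<in> pc_paths 0 T" "Z \<in> Zspace T T" "W \<in> Zspace T T"
    and eq: "\<And>\<eta>. \<eta> \<in> space (P t r (\<omega> t)) \<Longrightarrow> \<rho> r Z (glue t \<omega> \<eta>) = \<rho> r W (glue t \<omega> \<eta>)"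
  shows "\<rho> t Z \<omega> = \<rho> t W \<omega>"
proof -
  note consistent = assms(1)[unfolded stoch_cond_time_consistent_def, rule_format, OF assms(2-5)]
  have "\<rho> t Z \<omega> \<le> \<rho> t W \<omega>"
    by (rule consistent[OF assms(6,7)]) (rule st_le_cong, rule eq)
  moreover have "\<rho> t W \<omega> \<le> \<rho> t Z \<omega>"
    by (rule consistent[OF assms(7,6)]) (rule st_le_cong, rule eq[symmetric])
  ultimately show ?thesis by simp
qed

lemma translation_invariant_fixes_Zspace:
  assumes "translation_invariant T \<rho>" "normalized T \<rho>" "t \<in> {0..T}" "Y \<in> Zspace T t"
  shows "\<rho> t Y = Y"
proof -
  have "\<rho> t (\<lambda>\<omega>. Y \<omega> + 0) = (\<lambda>\<omega>. Y \<omega> + \<rho> t (\<lambda>_. 0) \<omega>)"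
    by (rule assms(1)[unfolded translation_invariant_def, rule_format, OF assms(3,4) zero_in_Zspace])
  then show ?thesis using assms(2,3) unfolding normalized_def by simp
qed

lemma dyn_risk_measure_vanishes:
  "dyn_risk_measure T \<rho> \<Longrightarrow> t \<in> {0..T} \<Longrightarrow> Z \<in> Zspace T T \<Longrightarrow> \<omega> \<notin> pc_paths 0 T \<Longrightarrow> \<rho> t Z \<omega> = 0"
  unfolding dyn_risk_measure_def using Zspace_vanishes by blast

lemma stoch_cond_time_consistent_imp_time_consistent:
  assumes "dyn_risk_measure T \<rho>" "stoch_cond_time_consistent T P \<rho>"
    and "normalized T \<rho>" "translation_invariant T \<rho>"
    and "0 \<le> t" "t \<le> r" "r \<le> T" "Z \<in> Zspace T T"
  shows "\<rho> t Z = \<rho> t (\<rho> r Z)"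
proof
  fix \<omega>
  have "\<rho> r Z \<in> Zspace T r" using assms(1,5-8) unfolding dyn_risk_measure_def by simp
  then have fixed: "\<rho> r (\<rho> r Z) = \<rho> r Z" and W: "\<rho> r Z \<in> Zspace T T"
    using translation_invariant_fixes_Zspace[OF assms(4,3)] Zspace_mono[OF assms(7)] assms(5-7)
    by simp_all
  show "\<rho> t Z \<omega> = \<rho> t (\<rho> r Z) \<omega>"
  proof (cases "\<omega> \<in> pc_paths 0 T")
    case True
    then show ?thesis
      using stoch_cond_time_consistent_cong[OF assms(2,5-7) True assms(8) W] fixed by simp
  next
    case False
    then show ?thesis using dyn_risk_measure_vanishes[OF assms(1)] assms(5-8) W by simp
  qed
qed

lemma risk_determined_by_continuations:
  assumes "chain_law T Q P" "stoch_cond_time_consistent T P \<rho>"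
    and "normalized T \<rho>" "translation_invariant T \<rho>"
    and "t \<in> {0..T}" "\<omega> \<in> pc_paths 0 T" "Z \<in> Zspace T T" "W \<in> Zspace T T"
    and "\<And>\<eta>. \<eta> \<in> path_space t T (\<omega> t) \<Longrightarrow> Z (glue t \<omega> \<eta>) = W (glue t \<omega> \<eta>)"
  shows "\<rho> t Z \<omega> = \<rho> t W \<omega>"
proof (rule stoch_cond_time_consistent_cong[OF assms(2) _ _ order_refl assms(6-8)])
  fix \<eta>
  assume "\<eta> \<in> space (P t T (\<omega> t))"
  then have "\<eta> \<in> path_space t T (\<omega> t)" using assms(1,5) unfolding chain_law_def by auto
  moreover have "T \<in> {0..T}" using assms(5) by simp
  ultimately show "\<rho> T Z (glue t \<omega> \<eta>) = \<rho> T W (glue t \<omega> \<eta>)"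
    using assms(9) translation_invariant_fixes_Zspace[OF assms(4,3) _ assms(7)]
      translation_invariant_fixes_Zspace[OF assms(4,3) _ assms(8)] by simp
qed (use assms(5) in auto)

lemma stoch_cond_time_consistent_imp_local:
  assumes "chain_law T Q P" "dyn_risk_measure T \<rho>" "stoch_cond_time_consistent T P \<rho>"
    and "normalized T \<rho>" "translation_invariant T \<rho>"
    and t: "t \<in> {0..T}" and Z: "Z \<in> Zspace T T" and A: "A \<in> sets (filt T t)"
  shows "\<rho> t (\<lambda>\<omega>. indicator A \<omega> * Z \<omega>) = (\<lambda>\<omega>. indicator A \<omega> * \<rho> t Z \<omega>)"
proof
  fix \<omega>
  have AZ: "(\<lambda>\<omega>. indicator A \<omega> * Z \<omega>) \<in> Zspace T T"
    using indicator_times_in_Zspace[OF sets_filt_mono[of t T] Z] A t by simp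
  note determined = risk_determined_by_continuations[OF assms(1,3-5) t _ AZ]
  show "\<rho> t (\<lambda>\<omega>. indicator A \<omega> * Z \<omega>) \<omega> = indicator A \<omega> * \<rho> t Z \<omega>"
  proof (cases "\<omega> \<in> pc_paths 0 T")
    case True
    have glue: "indicator A (glue t \<omega> \<eta>) * Z (glue t \<omega> \<eta>) = indicator A \<omega> * Z (glue t \<omega> \<eta>)"
      if "\<eta> \<in> path_space t T (\<omega> t)" for \<eta>
      using indicator_glue[OF A True _ Z] that unfolding path_space_def by simp
    show ?thesis
    proof (cases "\<omega> \<in> A")
      case True
      then show ?thesis using determined[OF \<open>\<omega> \<in> pc_paths 0 T\<close> Z] glue by simp
    next
      case False
      then have "\<rho> t (\<lambda>\<omega>. indicator A \<omega> * Z \<omega>) \<omega> = \<rho> t (\<lambda>_. 0) \<omega>"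
        using determined[OF \<open>\<omega> \<in> pc_paths 0 T\<close> zero_in_Zspace] glue by simp
      then show ?thesis using False assms(4) t unfolding normalized_def by simp
    qed
  next
    case False
    then show ?thesis using dyn_risk_measure_vanishes[OF assms(2) t] Z AZ by simp
  qed
qed

theorem theorem3p2:
  fixes T :: real
    and Q :: "real \<Rightarrow> real \<Rightarrow> 'x::finite \<Rightarrow> 'x \<Rightarrow> real"
    and P :: "real \<Rightarrow> real \<Rightarrow> 'x \<Rightarrow> (real \<Rightarrow> 'x) measure"
    and \<rho> :: "real \<Rightarrow> ((real \<Rightarrow> 'x) \<Rightarrow> real) \<Rightarrow> ((real \<Rightarrow> 'x) \<Rightarrow> real)"
  assumes "T > 0"
    and "transition_function T Q"
    and "bounded_rates T Q"
    and "chain_law T Q P"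
    and "dyn_risk_measure T \<rho>"
    and "stoch_cond_time_consistent T P \<rho>"
    and "normalized T \<rho>"
    and "translation_invariant T \<rho>"
  shows "(\<forall>t r Z. 0 \<le> t \<longrightarrow> t \<le> r \<longrightarrow> r \<le> T \<longrightarrow> Z \<in> Zspace T T \<longrightarrow>
            \<rho> t Z = \<rho> t (\<rho> r Z))
       \<and> (\<forall>t Z A. t \<in> {0..T} \<longrightarrow> Z \<in> Zspace T T \<longrightarrow> A \<in> sets (filt T t) \<longrightarrow>
            \<rho> t (\<lambda>\<omega>. indicator A \<omega> * Z \<omega>) = (\<lambda>\<omega>. indicator A \<omega> * \<rho> t Z \<omega>))"
  using stoch_cond_time_consistent_imp_time_consistent[OF assms(5-8)]
    stoch_cond_time_consistent_imp_local[OF assms(4-8)] by blast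

end
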